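(* For every integer $k\ge 2$, the $k$-equal-representation shortlisting rule is non-wasteful. For every integer $k\ge 1$, the $k$-equal-representation shortlisting rule is representatively efficient.
   Context: Let $\mathbb{P}=\{p_1,\dots,p_m\}$ be a finite set of projects, $c:\mathbb{P}\to\mathbb{N}$ a cost function with $c(P)=\sum_{p\in P}c(p)$, and $B\in\mathbb{N}$ a budget limit with $c(p)\le B$ for all $p$. A shortlisting instance is $I=\langle\mathbb{P},c,B\rangle$. The agents are $\mathcal{N}=\{1,\dots,n\}$; a shortlisting profile is $\boldsymbol{P}=(P_1,\dots,P_n)$ with $P_i\subseteq\mathbb{P}$, and $\bigcup\boldsymbol{P}=P_1\cup\dots\cup P_n$. A shortlisting rule $R$ maps each $(I,\boldsymbol{P})$ to $R(I,\boldsymbol{P})\subseteq\bigcup\boldsymbol{P}$. Tie-breaking: for a nonempty family $\mathfrak{P}$ of subsets of $\mathbb{P}$, $T(\mathfrak{P})$ is the unique $P\in\mathfrak{P}$ such that for every $P'\in\mathfrak{P}\setminus\{P\}$ the lowest-index project of $(P\setminus P')\cup(P'\setminus P)$ belongs to $P$. The $k$-equal-representation shortlisting rule returns $$R(I,\boldsymbol{P})=T\Big(\operatorname*{argmax}_{P\subseteq\bigcup\boldsymbol{P},\ c(P)\le kB}\ \sum_{i\in\mathcal{N}}\sum_{\ell=0}^{|P_i\cap P|}\frac{1}{n^{\ell}}\Big).$$ $R$ is non-wasteful if for every $I$ and $\boldsymbol{P}$, either $c(R(I,\boldsymbol{P}))\ge B$ or $R(I,\boldsymbol{P})=\bigcup\boldsymbol{P}$.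 A set $\mathcal{P}\subseteq\mathbb{P}$ is representatively dominated (for $I,\boldsymbol{P}$) if there is $\mathcal{P}'\subseteq\mathbb{P}$ with $c(\mathcal{P}')\le c(\mathcal{P})$ and $|\mathcal{P}'\cap P_i|\ge|\mathcal{P}\cap P_i|$ for all $i$, strictly for at least one $i$; $R$ is representatively efficient if its output is never representatively dominated. *)

theory Defs
  imports Complex_Main
begin

text \<open>Projects are natural numbers; the index of project p is p itself, so the
  "lowest-index project" of a finite set is its minimum.\<close>

definition valid_instance :: "nat set \<Rightarrow> (nat \<Rightarrow> nat) \<Rightarrow> nat \<Rightarrow> bool" where
  "valid_instance PP c B \<longleftrightarrow> finite PP \<and> (\<forall>p\<in>PP. c p \<le> B)"

definition valid_profile :: "nat set \<Rightarrow> nat \<Rightarrow> (nat \<Rightarrow> nat set) \<Rightarrow> bool" where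
  "valid_profile PP n Ps \<longleftrightarrow> (\<forall>i\<in>{1..n}. Ps i \<subseteq> PP)"

definition union_profile :: "nat \<Rightarrow> (nat \<Rightarrow> nat set) \<Rightarrow> nat set" where
  "union_profile n Ps = (\<Union>i\<in>{1..n}. Ps i)"

definition tiebreak :: "nat set set \<Rightarrow> nat set" where
  "tiebreak F = (THE P. P \<in> F \<and> (\<forall>P'\<in>F - {P}. Min ((P - P') \<union> (P' - P)) \<in> P))"

definition keq_score :: "nat \<Rightarrow> (nat \<Rightarrow> nat set) \<Rightarrow> nat set \<Rightarrow> real" where
  "keq_score n Ps P = (\<Sum>i\<in>{1..n}. \<Sum>l\<in>{0..card (Ps i \<inter> P)}. 1 / (real n) ^ l)"

type_synonym sl_rule = "nat set \<Rightarrow> (nat \<Rightarrow> nat) \<Rightarrow> nat \<Rightarrow> nat \<Rightarrow> (nat \<Rightarrow> nat set) \<Rightarrow> nat set"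

definition keq_rule :: "nat \<Rightarrow> sl_rule" where
  "keq_rule k PP c B n Ps = tiebreak
     {P. P \<subseteq> union_profile n Ps \<and> sum c P \<le> k * B \<and>
         (\<forall>Q. Q \<subseteq> union_profile n Ps \<and> sum c Q \<le> k * B \<longrightarrow>
              keq_score n Ps Q \<le> keq_score n Ps P)}"

definition non_wasteful :: "sl_rule \<Rightarrow> bool" where
  "non_wasteful R \<longleftrightarrow> (\<forall>PP c B n Ps. valid_instance PP c B \<and> valid_profile PP n Ps \<longrightarrow>
      sum c (R PP c B n Ps) \<ge> B \<or> R PP c B n Ps = union_profile n Ps)"

definition rep_dominated :: "nat set \<Rightarrow> (nat \<Rightarrow> nat) \<Rightarrow> nat \<Rightarrow> (nat \<Rightarrow> nat set) \<Rightarrow> nat set \<Rightarrow> bool" where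
  "rep_dominated PP c n Ps P \<longleftrightarrow> (\<exists>P'. P' \<subseteq> PP \<and> sum c P' \<le> sum c P \<and>
      (\<forall>i\<in>{1..n}. card (P' \<inter> Ps i) \<ge> card (P \<inter> Ps i)) \<and>
      (\<exists>i\<in>{1..n}. card (P' \<inter> Ps i) > card (P \<inter> Ps i)))"

definition rep_efficient :: "sl_rule \<Rightarrow> bool" where
  "rep_efficient R \<longleftrightarrow> (\<forall>PP c B n Ps. valid_instance PP c B \<and> valid_profile PP n Ps \<longrightarrow>
      \<not> rep_dominated PP c n Ps (R PP c B n Ps))"

end

theory Submission
  imports Defs
begin

text \<open>The tie-breaking rule compares finite sets lexicographically by their indicator
  vectors; this is a strict total order, so it selects a member of every finite non-empty family.
  For n \<ge> 1 the inner sum \<Sum>l\<le>m. 1/n^l is strictly increasing in m, so the score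
  strictly increases when no agent loses representation and some agent gains.  A score-maximal
  set therefore admits no feasible set that represents every agent at least as well and some
  agent strictly better.  Adding an approved project to a set costing less than B stays within
  k B once k \<ge> 2, which gives non-wastefulness; a representatively dominating set is no more
  expensive, which gives representative efficiency.\<close>

definition prefers :: "nat set \<Rightarrow> nat set \<Rightarrow> bool" where
  "prefers A B \<longleftrightarrow> Min (sym_diff A B) \<in> A"

lemma Min_sym_diff_in:
  assumes "finite A" "finite B" "A \<noteq> B"
  shows "Min (sym_diff A B) \<in> sym_diff A B"
  using assms by (intro Min_in) auto

lemma mem_iff_below_Min_sym_diff:
  assumes "finite A" "finite B" "y < Min (sym_diff A B)"
  shows "y \<in> A \<longleftrightarrow> y \<in> B"
proof (rule ccontr)
  assume "\<not> (y \<in> A \<longleftrightarrow> y \<in> B)"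
  then have "Min (sym_diff A B) \<le> y"
    using assms(1,2) by (intro Min_le) auto
  then show False using assms(3) by simp
qed

lemma prefers_total:
  assumes "finite A" "finite B" "A \<noteq> B"
  shows "prefers A B \<or> prefers B A"
  using Min_sym_diff_in[OF assms] unfolding prefers_def by (auto simp: Un_commute)

lemma prefers_asym:
  assumes "finite A" "finite B" "A \<noteq> B" "prefers A B"
  shows "\<not> prefers B A"
  using Min_sym_diff_in[OF assms(1-3)] assms(4) unfolding prefers_def by (auto simp: Un_commute)

lemma prefers_iff_witness:
  assumes "finite A" "finite B"
  shows "A \<noteq> B \<and> prefers A B \<longleftrightarrow> (\<exists>m. m \<in> A \<and> m \<notin> B \<and> (\<forall>y<m. y \<in> A \<longleftrightarrow> y \<in> B))"
proof
  assume "A \<noteq> B \<and> prefers A B"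
  then show "\<exists>m. m \<in> A \<and> m \<notin> B \<and> (\<forall>y<m. y \<in> A \<longleftrightarrow> y \<in> B)"
    using Min_sym_diff_in[OF assms] mem_iff_below_Min_sym_diff[OF assms] unfolding prefers_def by blast
next
  assume "\<exists>m. m \<in> A \<and> m \<notin> B \<and> (\<forall>y<m. y \<in> A \<longleftrightarrow> y \<in> B)"
  then obtain m where m: "m \<in> A" "m \<notin> B" "\<forall>y<m. y \<in> A \<longleftrightarrow> y \<in> B" by blast
  have "Min (sym_diff A B) = m"
  proof (rule Min_eqI)
    fix y assume "y \<in> sym_diff A B"
    then show "m \<le> y" using m(3) by (meson DiffD1 DiffD2 UnE not_le)
  qed (use assms m in auto)
  then show "A \<noteq> B \<and> prefers A B"
    using m unfolding prefers_def by auto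
qed

lemma prefers_trans:
  assumes "finite A" "finite B" "finite C"
    and "A \<noteq> B" "prefers A B" "B \<noteq> C" "prefers B C"
  shows "A \<noteq> C \<and> prefers A C"
proof -
  obtain a where a: "a \<in> A" "a \<notin> B" "\<forall>y<a. y \<in> A \<longleftrightarrow> y \<in> B"
    using assms prefers_iff_witness[of A B] by blast
  obtain b where b: "b \<in> B" "b \<notin> C" "\<forall>y<b. y \<in> B \<longleftrightarrow> y \<in> C"
    using assms prefers_iff_witness[of B C] by blast
  have "a \<noteq> b" using a b by auto
  then have "\<exists>m. m \<in> A \<and> m \<notin> C \<and> (\<forall>y<m. y \<in> A \<longleftrightarrow> y \<in> C)"
  proof (cases "a < b")
    case True
    then show ?thesis using a b(3) by (meson order.strict_trans)
  next
    case False
    then have "b < a" using \<open>a \<noteq> b\<close> by simp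
    then show ?thesis using b a(3) by (meson order.strict_trans)
  qed
  then show ?thesis
    using assms prefers_iff_witness[of A C] by blast
qed

lemma prefers_greatest_exists:
  assumes "finite F" "F \<noteq> {}" "\<forall>P\<in>F. finite P"
  shows "\<exists>P\<in>F. \<forall>P'\<in>F - {P}. prefers P P'"
  using assms
proof (induction F rule: finite_ne_induct)
  case (singleton x)
  then show ?case by auto
next
  case (insert Q F)
  then obtain P where P: "P \<in> F" "\<forall>P'\<in>F - {P}. prefers P P'" by auto
  have fin: "finite P" "finite Q" and "P \<noteq> Q" using insert P by auto
  show ?case
  proof (cases "prefers P Q")
    case True
    then show ?thesis using P by auto
  next
    case False
    then have "prefers Q P" using prefers_total[OF fin \<open>P \<noteq> Q\<close>] by blast
    have "prefers Q P'" if "P' \<in> F - {P}" for P'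
      using prefers_trans[of Q P P'] \<open>prefers Q P\<close> fin P that insert.prems \<open>P \<noteq> Q\<close>
      by auto
    then have "\<forall>P'\<in>insert Q F - {Q}. prefers Q P'"
      using \<open>prefers Q P\<close> by blast
    then show ?thesis by blast
  qed
qed

lemma tiebreak_in:
  assumes "finite F" "F \<noteq> {}" "\<forall>P\<in>F. finite P"
  shows "tiebreak F \<in> F"
proof -
  obtain P where P: "P \<in> F" "\<forall>P'\<in>F - {P}. prefers P P'"
    using prefers_greatest_exists[OF assms] by blast
  have "tiebreak F = P"
    unfolding tiebreak_def
  proof (rule the_equality)
    show "P \<in> F \<and> (\<forall>P'\<in>F - {P}. Min (sym_diff P P') \<in> P)"
      using P unfolding prefers_def by blast
  next
    fix Q assume Q: "Q \<in> F \<and> (\<forall>P'\<in>F - {Q}. Min (sym_diff Q P') \<in> Q)"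
    show "Q = P"
    proof (rule ccontr)
      assume "Q \<noteq> P"
      then have "prefers Q P" "prefers P Q" using P Q unfolding prefers_def by auto
      then show False using prefers_asym[of P Q] P Q assms(3) \<open>Q \<noteq> P\<close> by auto
    qed
  qed
  then show ?thesis using P by simp
qed

lemma strict_mono_geometric_partial_sum:
  assumes "n \<ge> 1"
  shows "strict_mono (\<lambda>m. \<Sum>l\<in>{0..m}. 1 / (real n) ^ l)"
  using assms by (intro strict_mono_Suc_iff[THEN iffD2]) simp

lemma keq_score_strict_mono:
  assumes "\<forall>i\<in>{1..n}. card (Ps i \<inter> P) \<le> card (Ps i \<inter> Q)"
    and "\<exists>i\<in>{1..n}. card (Ps i \<inter> P) < card (Ps i \<inter> Q)"
  shows "keq_score n Ps P < keq_score n Ps Q"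
proof -
  have "n \<ge> 1" using assms(2) by auto
  note mono = strict_mono_geometric_partial_sum[OF this]
  show ?thesis
    unfolding keq_score_def
  proof (rule sum_strict_mono_ex1)
    show "\<forall>i\<in>{1..n}. (\<Sum>l = 0..card (Ps i \<inter> P). 1 / real n ^ l)
                     \<le> (\<Sum>l = 0..card (Ps i \<inter> Q). 1 / real n ^ l)"
      using assms(1) strict_mono_less_eq[OF mono] by blast
    show "\<exists>i\<in>{1..n}. (\<Sum>l = 0..card (Ps i \<inter> P). 1 / real n ^ l)
                     < (\<Sum>l = 0..card (Ps i \<inter> Q). 1 / real n ^ l)"
      using assms(2) strict_mono_less[OF mono] by blast
  qed simp
qed

lemma finite_union_profile:
  assumes "valid_instance PP c B" "valid_profile PP n Ps"
  shows "finite (union_profile n Ps)"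
  using assms unfolding valid_instance_def valid_profile_def union_profile_def
  by (meson UN_least finite_subset)

lemma keq_rule_optimal:
  fixes k :: nat
  assumes "valid_instance PP c B" "valid_profile PP n Ps"
  defines "U \<equiv> union_profile n Ps" and "R \<equiv> keq_rule k PP c B n Ps"
  shows "R \<subseteq> U" and "sum c R \<le> k * B"
    and "\<And>Q. Q \<subseteq> U \<Longrightarrow> sum c Q \<le> k * B \<Longrightarrow> keq_score n Ps Q \<le> keq_score n Ps R"
proof -
  have "finite U" using finite_union_profile[OF assms(1,2)] by (simp add: U_def)
  define S where "S = {P. P \<subseteq> U \<and> sum c P \<le> k * B}"
  define F where "F = {P. P \<subseteq> U \<and> sum c P \<le> k * B \<and>
    (\<forall>Q. Q \<subseteq> U \<and> sum c Q \<le> k * B \<longrightarrow> keq_score n Ps Q \<le> keq_score n Ps P)}"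
  have "S \<subseteq> Pow U" by (auto simp: S_def)
  then have "finite S" using \<open>finite U\<close> by (simp add: finite_subset)
  have "{} \<in> S" by (simp add: S_def)
  let ?M = "Max (keq_score n Ps ` S)"
  have "?M \<in> keq_score n Ps ` S"
    using \<open>finite S\<close> \<open>{} \<in> S\<close> by (intro Max_in) blast+
  then obtain P where "?M = keq_score n Ps P" "P \<in> S" by (rule imageE)
  then have "\<forall>Q\<in>S. keq_score n Ps Q \<le> keq_score n Ps P"
    using Max_ge[OF finite_imageI[OF \<open>finite S\<close>, of "keq_score n Ps"]] by (metis imageI)
  with \<open>P \<in> S\<close> have "P \<in> F" by (simp add: F_def S_def)
  have "F \<subseteq> Pow U" by (auto simp: F_def)
  then have "finite F" "\<forall>P\<in>F. finite P"
    using \<open>finite U\<close> by (auto intro: finite_subset)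
  then have "tiebreak F \<in> F"
    using \<open>P \<in> F\<close> tiebreak_in by blast
  moreover have "R = tiebreak F"
    by (simp add: R_def keq_rule_def F_def U_def)
  ultimately have "R \<in> F" by simp
  then show "R \<subseteq> U" "sum c R \<le> k * B"
    and "\<And>Q. Q \<subseteq> U \<Longrightarrow> sum c Q \<le> k * B \<Longrightarrow> keq_score n Ps Q \<le> keq_score n Ps R"
    unfolding F_def by blast+
qed

lemma keq_rule_not_improvable:
  assumes "valid_instance PP c B" "valid_profile PP n Ps"
    and "Q \<subseteq> union_profile n Ps" "sum c Q \<le> k * B"
    and "\<forall>i\<in>{1..n}. card (Ps i \<inter> keq_rule k PP c B n Ps) \<le> card (Ps i \<inter> Q)"
    and "\<exists>i\<in>{1..n}. card (Ps i \<inter> keq_rule k PP c B n Ps) < card (Ps i \<inter> Q)"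
  shows False
  using keq_rule_optimal(3)[OF assms(1-4)] keq_score_strict_mono[OF assms(5,6)] by linarith

lemma keq_rule_non_wasteful:
  assumes "k \<ge> 2"
  shows "non_wasteful (keq_rule k)"
  unfolding non_wasteful_def
proof (intro allI impI)
  fix PP c B n Ps assume "valid_instance PP c B \<and> valid_profile PP n Ps"
  then have inst: "valid_instance PP c B" and prof: "valid_profile PP n Ps" by auto
  let ?R = "keq_rule k PP c B n Ps" and ?U = "union_profile n Ps"
  have sub: "?R \<subseteq> ?U" by (rule keq_rule_optimal(1)[OF inst prof])
  have "finite ?R" by (rule finite_subset[OF sub finite_union_profile[OF inst prof]])
  show "B \<le> sum c ?R \<or> ?R = ?U"
  proof (rule ccontr)
    assume "\<not> (B \<le> sum c ?R \<or> ?R = ?U)"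
    then have cheap: "sum c ?R < B" and "?R \<noteq> ?U" by auto
    then obtain p where "p \<in> ?U" "p \<notin> ?R" using sub by blast
    then obtain i where i: "i \<in> {1..n}" "p \<in> Ps i" unfolding union_profile_def by blast
    have "c p \<le> B" using inst prof i unfolding valid_profile_def valid_instance_def by blast
    then have "sum c (insert p ?R) \<le> 2 * B"
      using \<open>finite ?R\<close> \<open>p \<notin> ?R\<close> cheap by simp
    also have "\<dots> \<le> k * B" using assms by (rule mult_le_mono1)
    finally have cost: "sum c (insert p ?R) \<le> k * B" .
    have sub': "insert p ?R \<subseteq> ?U" using sub \<open>p \<in> ?U\<close> by blast
    have "\<forall>j\<in>{1..n}. card (Ps j \<inter> ?R) \<le> card (Ps j \<inter> insert p ?R)"
      using \<open>finite ?R\<close> by (intro ballI card_mono) auto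
    moreover have "card (Ps i \<inter> ?R) < card (Ps i \<inter> insert p ?R)"
      using \<open>finite ?R\<close> i \<open>p \<notin> ?R\<close> by (intro psubset_card_mono) auto
    ultimately show False
      using keq_rule_not_improvable[OF inst prof sub' cost] i(1) by blast
  qed
qed

lemma keq_rule_rep_efficient: "rep_efficient (keq_rule k)"
  unfolding rep_efficient_def
proof (intro allI impI notI)
  fix PP c B n Ps assume "valid_instance PP c B \<and> valid_profile PP n Ps"
  then have inst: "valid_instance PP c B" and prof: "valid_profile PP n Ps" by auto
  let ?R = "keq_rule k PP c B n Ps" and ?U = "union_profile n Ps"
  assume "rep_dominated PP c n Ps ?R"
  then obtain P' where P': "P' \<subseteq> PP" "sum c P' \<le> sum c ?R"
      "\<forall>i\<in>{1..n}. card (?R \<inter> Ps i) \<le> card (P' \<inter> Ps i)"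
      "\<exists>i\<in>{1..n}. card (?R \<inter> Ps i) < card (P' \<inter> Ps i)"
    unfolding rep_dominated_def by blast
  \<comment> \<open>Dropping projects nobody approves keeps every agent's count and does not raise the cost.\<close>
  let ?Q = "P' \<inter> ?U"
  have counts: "Ps i \<inter> ?Q = P' \<inter> Ps i" "Ps i \<inter> ?R = ?R \<inter> Ps i" if "i \<in> {1..n}" for i
    using that unfolding union_profile_def by auto
  have "sum c ?Q \<le> sum c P'"
    using inst P'(1) unfolding valid_instance_def by (intro sum_mono2) (auto intro: finite_subset)
  also have "\<dots> \<le> k * B" using P'(2) keq_rule_optimal(2)[OF inst prof, where k = k] by linarith
  finally have cost: "sum c ?Q \<le> k * B" .
  show False
    using keq_rule_not_improvable[OF inst prof Int_lower2 cost] P'(3,4) counts by simp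
qed

theorem proposition2:
  shows "(\<forall>k::nat. k \<ge> 2 \<longrightarrow> non_wasteful (keq_rule k)) \<and>
         (\<forall>k::nat. k \<ge> 1 \<longrightarrow> rep_efficient (keq_rule k))"
  using keq_rule_non_wasteful keq_rule_rep_efficient by blast

end
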